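(* Assume that for all $0\le i,j\le d$: $E^*_iAE^*_j=0$ if $|i-j|>1$, and $E^*_iAE^*_j\ne0$ if $|i-j|=1$. Then there exists a unique antiautomorphism $\dagger$ of $\mathcal A$ such that $A^\dagger=A$ and $A^{*\dagger}=A^*$. Moreover $X^{\dagger\dagger}=X$ for all $X\in\mathcal A$.
   Context: Let $\mathbb K$ be a field, $d\ge 0$ an integer, and $\mathcal A$ a $\mathbb K$-algebra isomorphic to $\mathrm{Mat}_{d+1}(\mathbb K)$, with identity $I$. An element of $\mathcal A$ is multiplicity-free if it has $d+1$ mutually distinct eigenvalues, all in $\mathbb K$; for such $A$ with eigenvalues $\theta_0,\ldots,\theta_d$, the primitive idempotent associated with $\theta_i$ is $E_i=\prod_{j\ne i}(A-\theta_jI)/(\theta_i-\theta_j)$. Standing setup: $A,A^*$ are multiplicity-free elements of $\mathcal A$ ($A^*$ is just a name, not an adjoint); $E^*_0,\ldots,E^*_d$ is an ordering of the primitive idempotents of $A^*$. An antiautomorphism of $\mathcal A$ is a $\mathbb K$-linear bijection $\sigma:\mathcal A\to\mathcal A$ with $(XY)^\sigma=Y^\sigma X^\sigma$ for all $X,Y\in\mathcal A$. *)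

theory Defs
  imports "Jordan_Normal_Form.Char_Poly"
begin

text \<open>The algebra is realised concretely as the full matrix algebra of
  (d+1) x (d+1) matrices over the field 'a, i.e. carrier_mat (Suc d) (Suc d).\<close>

definition mult_free :: "nat \<Rightarrow> 'a :: field mat \<Rightarrow> bool" where
  "mult_free d A \<longleftrightarrow> A \<in> carrier_mat (Suc d) (Suc d) \<and>
     card {k. eigenvalue A k} = Suc d"

definition prim_idem :: "nat \<Rightarrow> 'a :: field mat \<Rightarrow> (nat \<Rightarrow> 'a) \<Rightarrow> nat \<Rightarrow> 'a mat" where
  "prim_idem d A th i =
     foldr (\<lambda>j M. ((1 / (th i - th j)) \<cdot>\<^sub>m (A - th j \<cdot>\<^sub>m 1\<^sub>m (Suc d))) * M)
       (filter (\<lambda>j. j \<noteq> i) [0..<Suc d]) (1\<^sub>m (Suc d))"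

definition eig_ordering :: "nat \<Rightarrow> 'a :: field mat \<Rightarrow> (nat \<Rightarrow> 'a) \<Rightarrow> bool" where
  "eig_ordering d A th \<longleftrightarrow> inj_on th {0..d} \<and> th ` {0..d} = {k. eigenvalue A k}"

definition antiautomorphism :: "nat \<Rightarrow> ('a :: field mat \<Rightarrow> 'a mat) \<Rightarrow> bool" where
  "antiautomorphism n \<sigma> \<longleftrightarrow>
     bij_betw \<sigma> (carrier_mat n n) (carrier_mat n n) \<and>
     (\<forall>X\<in>carrier_mat n n. \<forall>Y\<in>carrier_mat n n. \<sigma> (X + Y) = \<sigma> X + \<sigma> Y) \<and>
     (\<forall>c. \<forall>X\<in>carrier_mat n n. \<sigma> (c \<cdot>\<^sub>m X) = c \<cdot>\<^sub>m \<sigma> X) \<and>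
     (\<forall>X\<in>carrier_mat n n. \<forall>Y\<in>carrier_mat n n. \<sigma> (X * Y) = \<sigma> Y * \<sigma> X)"

end

(*
  Let S be an eigenbasis of A*, so that E*_i = S e_ii S^-1 for the matrix units e_ij, and put
  T = S^-1 A S. Then E*_i A E*_j = T_ij S e_ij S^-1, so the hypotheses say exactly that T is an
  irreducible tridiagonal matrix. Such a T is symmetrised by an invertible diagonal D, i.e.
  D T^t = T D, and then X |-> M X^t M^-1 with M = S D S^t is an antiautomorphism fixing S Z S^-1
  whenever D Z^t = Z D; this covers A and the diagonalised A*.
  On the other hand, the E*_i are polynomials in A*, and E*_i A E*_j with |i - j| = 1 yields the
  conjugated matrix units S e_ij S^-1 for neighbouring i, j; their products give all matrix units,
  so A and A* generate the whole algebra. An antiautomorphism is determined by its values on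
  generators, which gives uniqueness, and the same induction shows that the dagger is an involution.
*)
theory Submission
  imports Defs
begin

section \<open>Matrix units\<close>

definition mat_unit :: "nat \<Rightarrow> nat \<Rightarrow> nat \<Rightarrow> 'a :: zero_neq_one mat" where
  "mat_unit n i j = mat n n (\<lambda>(a, b). if a = i \<and> b = j then 1 else 0)"

lemma mat_unit_carrier[simp]: "mat_unit n i j \<in> carrier_mat n n"
  and dim_mat_unit[simp]: "dim_row (mat_unit n i j) = n" "dim_col (mat_unit n i j) = n"
  unfolding mat_unit_def by auto

lemma index_mat_unit[simp]:
  "a < n \<Longrightarrow> b < n \<Longrightarrow> mat_unit n i j $$ (a, b) = (if a = i \<and> b = j then 1 else 0)"
  unfolding mat_unit_def by auto

lemma mat_unit_mult_left:
  fixes X :: "'a :: semiring_1 mat"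
  assumes "X \<in> carrier_mat n m" and "j < n"
  shows "mat_unit n i j * X = mat n m (\<lambda>(a, b). if a = i then X $$ (j, b) else 0)"
  using assms
  by (intro eq_matI) (auto simp: scalar_prod_def if_distrib[of "\<lambda>x. x * _"] cong: if_cong)

lemma mat_unit_mult_right:
  fixes X :: "'a :: semiring_1 mat"
  assumes "X \<in> carrier_mat m n" and "i < n"
  shows "X * mat_unit n i j = mat m n (\<lambda>(a, b). if b = j then X $$ (a, i) else 0)"
  using assms
  by (intro eq_matI) (auto simp: scalar_prod_def if_distrib[of "\<lambda>x. _ * x"] cong: if_cong)

lemma mat_unit_mult_mat_unit:
  assumes "i < n" "j < n" "k < n" "l < n"
  shows "mat_unit n i j * mat_unit n k l =
    (if j = k then mat_unit n i l else (0\<^sub>m n n :: 'a :: semiring_1 mat))"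
  using assms by (subst mat_unit_mult_right) auto

lemma mat_unit_sandwich:
  fixes X :: "'a :: semiring_1 mat"
  assumes "X \<in> carrier_mat n n" and "i < n" and "j < n"
  shows "mat_unit n i i * X * mat_unit n j j = X $$ (i, j) \<cdot>\<^sub>m mat_unit n i j"
  using assms by (subst mat_unit_mult_left, simp_all, subst mat_unit_mult_right) auto

section \<open>Conjugation by an invertible matrix\<close>

lemma transpose_smult_mat: "transpose_mat (c \<cdot>\<^sub>m X) = c \<cdot>\<^sub>m transpose_mat X"
  by (intro eq_matI) auto

locale mat_inverse_pair =
  fixes n :: nat and P Q :: "'a :: field mat"
  assumes P_carrier[simp]: "P \<in> carrier_mat n n" and Q_carrier[simp]: "Q \<in> carrier_mat n n"
    and P_Q: "P * Q = 1\<^sub>m n" and Q_P: "Q * P = 1\<^sub>m n"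
begin

lemmas square_mat_simps = assoc_mult_mat[of _ n n _ n _ n] mult_carrier_mat[of _ n n _ n]
  mult_add_distrib_mat[of _ n n _ n] add_mult_distrib_mat[of _ n n _ _ n]
  mult_smult_distrib[of _ n n _ n] mult_smult_assoc_mat[of _ n n _ n] transpose_mult[of _ n n _ n]

lemma swap: "mat_inverse_pair n Q P"
  by unfold_locales (simp_all add: P_Q Q_P)

lemma Q_P_mult_cancel: "X \<in> carrier_mat n n \<Longrightarrow> Q * (P * X) = X"
  by (simp add: Q_P flip: assoc_mult_mat[of _ n n _ n _ n])

lemma P_Q_mult_cancel: "X \<in> carrier_mat n n \<Longrightarrow> P * (Q * X) = X"
  by (simp add: P_Q flip: assoc_mult_mat[of _ n n _ n _ n])

lemmas cancel_simps = P_Q Q_P Q_P_mult_cancel P_Q_mult_cancel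

lemma transpose: "mat_inverse_pair n (transpose_mat Q) (transpose_mat P)"
  by unfold_locales (simp_all add: cancel_simps flip: transpose_mult[of _ n n _ n])

lemma mult:
  assumes "mat_inverse_pair n P' Q'"
  shows "mat_inverse_pair n (P * P') (Q' * Q)"
proof -
  interpret P': mat_inverse_pair n P' Q' by (fact assms)
  show ?thesis
    by unfold_locales (simp_all add: square_mat_simps cancel_simps P'.cancel_simps)
qed

lemma mult_P_Q_cancel: "X \<in> carrier_mat m n \<Longrightarrow> X * P * Q = X"
  by (simp add: assoc_mult_mat[of X m n P n Q n] P_Q)

lemma conj_carrier[simp]: "X \<in> carrier_mat n n \<Longrightarrow> P * X * Q \<in> carrier_mat n n"
  by (simp add: square_mat_simps)

lemma conj_cancel: "X \<in> carrier_mat n n \<Longrightarrow> Q * (P * X * Q) * P = X"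
  by (simp add: square_mat_simps cancel_simps)

lemma conj_one: "P * 1\<^sub>m n * Q = 1\<^sub>m n"
  using right_mult_one_mat[OF P_carrier] by (simp add: P_Q)

lemma conj_add:
  "X \<in> carrier_mat n n \<Longrightarrow> Y \<in> carrier_mat n n \<Longrightarrow> P * (X + Y) * Q = P * X * Q + P * Y * Q"
  by (simp add: square_mat_simps)

lemma conj_smult: "X \<in> carrier_mat n n \<Longrightarrow> P * (c \<cdot>\<^sub>m X) * Q = c \<cdot>\<^sub>m (P * X * Q)"
  by (simp add: square_mat_simps)

lemma conj_mult:
  "X \<in> carrier_mat n n \<Longrightarrow> Y \<in> carrier_mat n n \<Longrightarrow> P * (X * Y) * Q = P * X * Q * (P * Y * Q)"
  by (simp add: square_mat_simps cancel_simps)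

lemma antiautomorphism_transpose_conj: "antiautomorphism n (\<lambda>X. P * transpose_mat X * Q)"
  unfolding antiautomorphism_def
proof (intro conjI ballI allI)
  show "bij_betw (\<lambda>X. P * transpose_mat X * Q) (carrier_mat n n) (carrier_mat n n)"
  proof (rule bij_betw_byWitness[where f' = "\<lambda>X. transpose_mat (Q * X * P)"])
    show "\<forall>X\<in>carrier_mat n n. transpose_mat (Q * (P * transpose_mat X * Q) * P) = X"
      by (simp add: conj_cancel)
    show "\<forall>X\<in>carrier_mat n n. P * transpose_mat (transpose_mat (Q * X * P)) * Q = X"
      by (simp add: mat_inverse_pair.conj_cancel[OF swap])
    show "(\<lambda>X. P * transpose_mat X * Q) ` carrier_mat n n \<subseteq> carrier_mat n n"
      by (simp add: image_subset_iff)
    show "(\<lambda>X. transpose_mat (Q * X * P)) ` carrier_mat n n \<subseteq> carrier_mat n n"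
      by (simp add: image_subset_iff mat_inverse_pair.conj_carrier[OF swap])
  qed
next
  fix X Y :: "'a mat"
  assume "X \<in> carrier_mat n n" and "Y \<in> carrier_mat n n"
  then show "P * transpose_mat (X + Y) * Q = P * transpose_mat X * Q + P * transpose_mat Y * Q"
    and "P * transpose_mat (X * Y) * Q = P * transpose_mat Y * Q * (P * transpose_mat X * Q)"
    by (simp_all add: transpose_add transpose_mult conj_add conj_mult)
next
  fix c and X :: "'a mat"
  assume "X \<in> carrier_mat n n"
  then show "P * transpose_mat (c \<cdot>\<^sub>m X) * Q = c \<cdot>\<^sub>m (P * transpose_mat X * Q)"
    by (simp add: transpose_smult_mat conj_smult)
qed

end

section \<open>Antiautomorphisms and generated subalgebras\<close>

lemma antiautomorphism_carrier:
  assumes "antiautomorphism n \<sigma>" and "X \<in> carrier_mat n n"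
  shows "\<sigma> X \<in> carrier_mat n n"
  using assms(1) bij_betw_apply[OF _ assms(2)] unfolding antiautomorphism_def by blast

lemma antiautomorphism_smult:
  assumes "antiautomorphism n \<sigma>" and "X \<in> carrier_mat n n"
  shows "\<sigma> (c \<cdot>\<^sub>m X) = c \<cdot>\<^sub>m \<sigma> X"
  using assms unfolding antiautomorphism_def by simp

lemma
  assumes "antiautomorphism n \<sigma>" and "X \<in> carrier_mat n n" and "Y \<in> carrier_mat n n"
  shows antiautomorphism_add: "\<sigma> (X + Y) = \<sigma> X + \<sigma> Y"
    and antiautomorphism_mult: "\<sigma> (X * Y) = \<sigma> Y * \<sigma> X"
  using assms unfolding antiautomorphism_def by simp_all

lemma antiautomorphism_one:
  assumes \<sigma>: "antiautomorphism n \<sigma>"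
  shows "\<sigma> (1\<^sub>m n) = 1\<^sub>m n"
proof -
  have "1\<^sub>m n \<in> \<sigma> ` carrier_mat n n"
    using \<sigma> unfolding antiautomorphism_def bij_betw_def by simp
  then obtain X where X: "X \<in> carrier_mat n n" and \<sigma>X: "\<sigma> X = 1\<^sub>m n"
    by (metis imageE)
  have "\<sigma> (1\<^sub>m n) = \<sigma> (1\<^sub>m n) * \<sigma> X"
    using antiautomorphism_carrier[OF \<sigma> one_carrier_mat] \<sigma>X by simp
  also have "\<dots> = \<sigma> X"
    using antiautomorphism_mult[OF \<sigma> X one_carrier_mat] X by simp
  finally show ?thesis
    using \<sigma>X by simp
qed

inductive_set generated_mat_algebra :: "nat \<Rightarrow> 'a :: field mat set \<Rightarrow> 'a mat set"
  for n :: nat and G :: "'a mat set" where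
  generator: "X \<in> G \<Longrightarrow> X \<in> generated_mat_algebra n G"
| one: "1\<^sub>m n \<in> generated_mat_algebra n G"
| add: "X \<in> generated_mat_algebra n G \<Longrightarrow> Y \<in> generated_mat_algebra n G \<Longrightarrow>
    X + Y \<in> generated_mat_algebra n G"
| mult: "X \<in> generated_mat_algebra n G \<Longrightarrow> Y \<in> generated_mat_algebra n G \<Longrightarrow>
    X * Y \<in> generated_mat_algebra n G"
| smult: "X \<in> generated_mat_algebra n G \<Longrightarrow> c \<cdot>\<^sub>m X \<in> generated_mat_algebra n G"

lemma generated_mat_algebra_carrier:
  assumes "G \<subseteq> carrier_mat n n" and "X \<in> generated_mat_algebra n G"
  shows "X \<in> carrier_mat n n"
  using assms(2) by (induction rule: generated_mat_algebra.induct) (use assms(1) in auto)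

lemma generated_mat_algebra_minimal:
  "G \<subseteq> generated_mat_algebra n H \<Longrightarrow> generated_mat_algebra n G \<subseteq> generated_mat_algebra n H"
proof
  show "X \<in> generated_mat_algebra n H"
    if "G \<subseteq> generated_mat_algebra n H" and "X \<in> generated_mat_algebra n G" for X
    using that(2,1)
    by (induction rule: generated_mat_algebra.induct) (auto intro: generated_mat_algebra.intros)
qed

lemma antiautomorphisms_eq_on_generated:
  assumes \<sigma>: "antiautomorphism n \<sigma>" and \<tau>: "antiautomorphism n \<tau>"
    and G: "G \<subseteq> carrier_mat n n" and eq: "\<And>X. X \<in> G \<Longrightarrow> \<sigma> X = \<tau> X"
    and X: "X \<in> generated_mat_algebra n G"
  shows "\<sigma> X = \<tau> X"
  using X
proof (induction rule: generated_mat_algebra.induct)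
  case (mult X Y)
  then show ?case
    using generated_mat_algebra_carrier[OF G]
    by (simp add: antiautomorphism_mult[OF \<sigma>] antiautomorphism_mult[OF \<tau>])
qed (use generated_mat_algebra_carrier[OF G] in \<open>simp_all add: eq antiautomorphism_one \<sigma> \<tau>
  antiautomorphism_add[OF \<sigma>] antiautomorphism_add[OF \<tau>]
  antiautomorphism_smult[OF \<sigma>] antiautomorphism_smult[OF \<tau>]\<close>)

lemma antiautomorphism_involutive_on_generated:
  assumes \<sigma>: "antiautomorphism n \<sigma>"
    and G: "G \<subseteq> carrier_mat n n" and inv: "\<And>X. X \<in> G \<Longrightarrow> \<sigma> (\<sigma> X) = X"
    and X: "X \<in> generated_mat_algebra n G"
  shows "\<sigma> (\<sigma> X) = X"
  using X
proof (induction rule: generated_mat_algebra.induct)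
  case (mult X Y)
  then show ?case
    using generated_mat_algebra_carrier[OF G]
    by (simp add: antiautomorphism_mult[OF \<sigma>] antiautomorphism_carrier[OF \<sigma>])
qed (use generated_mat_algebra_carrier[OF G] in \<open>simp_all add: inv antiautomorphism_one \<sigma>
  antiautomorphism_add[OF \<sigma>] antiautomorphism_smult[OF \<sigma>] antiautomorphism_carrier[OF \<sigma>]\<close>)

lemma (in mat_inverse_pair) conj_generated_mat_algebra:
  assumes G: "G \<subseteq> carrier_mat n n" and X: "X \<in> generated_mat_algebra n G"
  shows "P * X * Q \<in> generated_mat_algebra n ((\<lambda>X. P * X * Q) ` G)"
  using X
proof (induction rule: generated_mat_algebra.induct)
  case one
  then show ?case
    by (simp add: conj_one generated_mat_algebra.one)
next
  case (add X Y)
  then show ?case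
    using generated_mat_algebra_carrier[OF G] by (simp add: conj_add generated_mat_algebra.add)
next
  case (mult X Y)
  then show ?case
    using generated_mat_algebra_carrier[OF G] by (simp add: conj_mult generated_mat_algebra.mult)
next
  case (smult X c)
  then show ?case
    using generated_mat_algebra_carrier[OF G] by (simp add: conj_smult generated_mat_algebra.smult)
qed (simp add: generated_mat_algebra.generator)

lemma mat_units_generate_carrier:
  assumes units: "\<And>i j. i < n \<Longrightarrow> j < n \<Longrightarrow> mat_unit n i j \<in> generated_mat_algebra n G"
  shows "carrier_mat n n \<subseteq> generated_mat_algebra n G"
proof -
  have "\<forall>Y\<in>carrier_mat n n. (\<forall>a<n. \<forall>b<n. (a, b) \<notin> K \<longrightarrow> Y $$ (a, b) = 0) \<longrightarrow>
      Y \<in> generated_mat_algebra n G"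
    if "K \<subseteq> {..<n} \<times> {..<n}" for K
    using finite_subset[OF that finite_cartesian_product[OF finite_lessThan finite_lessThan]] that
  proof (induction K rule: finite_subset_induct')
    case empty
    have "Y = 0 \<cdot>\<^sub>m 1\<^sub>m n" if "Y \<in> carrier_mat n n" "\<forall>a<n. \<forall>b<n. Y $$ (a, b) = 0" for Y :: "'a mat"
      using that by auto
    then show ?case
      by (metis empty_iff generated_mat_algebra.one generated_mat_algebra.smult)
  next
    case (insert ij K)
    obtain i j where ij: "ij = (i, j)" "i < n" "j < n"
      using insert.hyps by auto
    show ?case
    proof (intro ballI impI)
      fix Y :: "'a mat"
      assume Y: "Y \<in> carrier_mat n n" and supp: "\<forall>a<n. \<forall>b<n. (a, b) \<notin> insert ij K \<longrightarrow> Y $$ (a, b) = 0"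
      define Y' where "Y' = mat n n (\<lambda>ab. if ab = (i, j) then 0 else Y $$ ab)"
      have "Y' \<in> generated_mat_algebra n G"
        using insert.IH supp ij by (auto simp: Y'_def)
      moreover have "Y = Y' + Y $$ (i, j) \<cdot>\<^sub>m mat_unit n i j"
        using Y by (auto simp: Y'_def)
      ultimately show "Y \<in> generated_mat_algebra n G"
        using units[OF ij(2,3)] by (metis generated_mat_algebra.add generated_mat_algebra.smult)
    qed
  qed
  then show ?thesis
    by blast
qed

lemma irreducible_and_diagonal_units_generate_carrier:
  fixes T :: "'a :: field mat"
  assumes T: "T \<in> carrier_mat n n"
    and nz: "\<And>i. Suc i < n \<Longrightarrow> T $$ (i, Suc i) \<noteq> 0 \<and> T $$ (Suc i, i) \<noteq> 0"
  shows "carrier_mat n n \<subseteq> generated_mat_algebra n (insert T {mat_unit n i i | i. i < n})"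
proof (rule mat_units_generate_carrier)
  let ?S = "generated_mat_algebra n (insert T {mat_unit n i i | i. i < n})"
  have diag: "mat_unit n i i \<in> ?S" if "i < n" for i
    using that by (blast intro: generated_mat_algebra.generator)
  have entry: "mat_unit n i j \<in> ?S" if "i < n" "j < n" "T $$ (i, j) \<noteq> 0" for i j
  proof -
    have "mat_unit n i i * T * mat_unit n j j \<in> ?S"
      using that diag by (blast intro: generated_mat_algebra.intros)
    then have "(1 / T $$ (i, j)) \<cdot>\<^sub>m (T $$ (i, j) \<cdot>\<^sub>m mat_unit n i j) \<in> ?S"
      unfolding mat_unit_sandwich[OF T that(1,2)] by (rule generated_mat_algebra.smult)
    moreover have "(1 / T $$ (i, j)) \<cdot>\<^sub>m (T $$ (i, j) \<cdot>\<^sub>m mat_unit n i j) = mat_unit n i j"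
      using that(3) by auto
    ultimately show ?thesis
      by simp
  qed
  have path: "mat_unit n i (i + k) \<in> ?S \<and> mat_unit n (i + k) i \<in> ?S" if "i + k < n" for i k
    using that
  proof (induction k)
    case (Suc k)
    have "mat_unit n i (i + k) * mat_unit n (i + k) (i + Suc k) \<in> ?S"
      using Suc nz[of "i + k"] entry[of "i + k" "i + Suc k"]
      by (simp add: generated_mat_algebra.mult)
    moreover have "mat_unit n (i + Suc k) (i + k) * mat_unit n (i + k) i \<in> ?S"
      using Suc nz[of "i + k"] entry[of "i + Suc k" "i + k"]
      by (simp add: generated_mat_algebra.mult)
    ultimately show ?case
      using Suc.prems by (simp add: mat_unit_mult_mat_unit)
  qed (simp add: diag)
  show "mat_unit n i j \<in> ?S" if "i < n" "j < n" for i j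
  proof (cases "i \<le> j")
    case True
    then show ?thesis
      using path[of i "j - i"] that by simp
  next
    case False
    then show ?thesis
      using path[of j "i - j"] that by simp
  qed
qed

lemma (in mat_inverse_pair) conj_irreducible_generates_carrier:
  assumes T: "T \<in> carrier_mat n n"
    and nz: "\<And>i. Suc i < n \<Longrightarrow> T $$ (i, Suc i) \<noteq> 0 \<and> T $$ (Suc i, i) \<noteq> 0"
    and gen_T: "P * T * Q \<in> generated_mat_algebra n G"
    and gen_units: "\<And>i. i < n \<Longrightarrow> P * mat_unit n i i * Q \<in> generated_mat_algebra n G"
  shows "carrier_mat n n \<subseteq> generated_mat_algebra n G"
proof
  fix X :: "'a mat"
  assume X: "X \<in> carrier_mat n n"
  let ?H = "insert T {mat_unit n i i | i. i < n}"
  have "Q * X * P \<in> generated_mat_algebra n ?H"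
    using irreducible_and_diagonal_units_generate_carrier[OF T nz] X
    by (auto intro: mat_inverse_pair.conj_carrier[OF swap])
  then have "P * (Q * X * P) * Q \<in> generated_mat_algebra n ((\<lambda>X. P * X * Q) ` ?H)"
    by (rule conj_generated_mat_algebra[rotated]) (auto simp: T)
  also have "\<dots> \<subseteq> generated_mat_algebra n G"
    using gen_T gen_units by (intro generated_mat_algebra_minimal) auto
  finally show "X \<in> generated_mat_algebra n G"
    using mat_inverse_pair.conj_cancel[OF swap X] by simp
qed

section \<open>Irreducible tridiagonal matrices\<close>

definition irreducible_tridiagonal :: "nat \<Rightarrow> 'a :: zero mat \<Rightarrow> bool" where
  "irreducible_tridiagonal n T \<longleftrightarrow> T \<in> carrier_mat n n \<and>
     (\<forall>i<n. \<forall>j<n. Suc i < j \<or> Suc j < i \<longrightarrow> T $$ (i, j) = 0) \<and>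
     (\<forall>i. Suc i < n \<longrightarrow> T $$ (i, Suc i) \<noteq> 0 \<and> T $$ (Suc i, i) \<noteq> 0)"

lemma irreducible_tridiagonal_symmetrizable:
  fixes T :: "'a :: field mat"
  assumes "irreducible_tridiagonal n T"
  shows "\<exists>\<delta>. (\<forall>i<n. \<delta> i \<noteq> 0) \<and> mat_diag n \<delta> * transpose_mat T = T * mat_diag n \<delta>"
proof -
  have T: "T \<in> carrier_mat n n"
    and zero: "\<And>i j. i < n \<Longrightarrow> j < n \<Longrightarrow> Suc i < j \<or> Suc j < i \<Longrightarrow> T $$ (i, j) = 0"
    and nz: "\<And>i. Suc i < n \<Longrightarrow> T $$ (i, Suc i) \<noteq> 0 \<and> T $$ (Suc i, i) \<noteq> 0"
    using assms unfolding irreducible_tridiagonal_def by auto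
  \<comment> \<open>Entrywise, \<open>D T\<^sup>T = T D\<close> reads \<open>\<delta> a * T $$ (b, a) = T $$ (a, b) * \<delta> b\<close>; off the three
    diagonals both sides vanish, and on them it only fixes the ratio \<open>\<delta> (Suc k) / \<delta> k\<close>.\<close>
  define \<delta> where "\<delta> = rec_nat 1 (\<lambda>k x. x * T $$ (Suc k, k) / T $$ (k, Suc k))"
  have \<delta>_Suc: "\<delta> (Suc k) = \<delta> k * T $$ (Suc k, k) / T $$ (k, Suc k)" for k
    by (simp add: \<delta>_def)
  have "\<delta> k \<noteq> 0" if "k < n" for k
    using that by (induction k) (simp_all add: \<delta>_def nz)
  moreover have "\<delta> a * T $$ (b, a) = T $$ (a, b) * \<delta> b" if "a < n" "b < n" for a b
  proof -
    consider "a = b" | "Suc a < b \<or> Suc b < a" | "b = Suc a" | "a = Suc b"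
      by linarith
    then show ?thesis
      by cases (use that zero nz in \<open>auto simp: \<delta>_Suc field_simps\<close>)
  qed
  ultimately show ?thesis
    using T by (intro exI[of _ \<delta>]) (auto simp: mat_diag_mult_left mat_diag_mult_right)
qed

lemma transpose_mat_diag[simp]: "transpose_mat (mat_diag n f) = mat_diag n f"
  by (auto simp: mat_diag_def)

lemma (in mat_inverse_pair) transpose_conj_fixed:
  assumes D: "mat_inverse_pair n D Di" and Z: "Z \<in> carrier_mat n n"
    and DZ: "D * transpose_mat Z = Z * D"
  shows "P * D * transpose_mat P * transpose_mat (P * Z * Q) * (transpose_mat Q * (Di * Q))
    = P * Z * Q"
proof -
  interpret D: mat_inverse_pair n D Di by (fact D)
  interpret Pt: mat_inverse_pair n "transpose_mat Q" "transpose_mat P" by (fact transpose)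
  have "P * D * transpose_mat P * transpose_mat (P * Z * Q) * (transpose_mat Q * (Di * Q))
      = P * (D * transpose_mat Z * (Di * Q))"
    using Z by (simp add: square_mat_simps Pt.cancel_simps)
  also have "\<dots> = P * (Z * (D * (Di * Q)))"
    using Z by (simp add: DZ square_mat_simps)
  also have "\<dots> = P * Z * Q"
    using Z by (simp add: D.cancel_simps square_mat_simps)
  finally show ?thesis .
qed

lemma (in mat_inverse_pair) exists_antiautomorphism_fixing:
  assumes T: "irreducible_tridiagonal n T"
  shows "\<exists>\<sigma>. antiautomorphism n \<sigma> \<and> \<sigma> (P * T * Q) = P * T * Q \<and>
           \<sigma> (P * mat_diag n f * Q) = P * mat_diag n f * Q"
proof -
  obtain \<delta> where \<delta>: "\<forall>i<n. \<delta> i \<noteq> 0" and DT: "mat_diag n \<delta> * transpose_mat T = T * mat_diag n \<delta>"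
    using irreducible_tridiagonal_symmetrizable[OF T] by blast
  define D Di where "D = mat_diag n \<delta>" and "Di = mat_diag n (\<lambda>i. 1 / \<delta> i)"
  have "mat_diag n (\<lambda>i. \<delta> i * (1 / \<delta> i)) = 1\<^sub>m n" "mat_diag n (\<lambda>i. 1 / \<delta> i * \<delta> i) = 1\<^sub>m n"
    using \<delta> by (auto simp: mat_diag_def)
  then have D: "mat_inverse_pair n D Di"
    by unfold_locales (simp_all add: D_def Di_def)
  interpret M: mat_inverse_pair n "P * D * transpose_mat P" "transpose_mat Q * (Di * Q)"
    by (rule mat_inverse_pair.mult[OF mult[OF D] mat_inverse_pair.transpose[OF swap]])
  have "D * transpose_mat (mat_diag n f) = mat_diag n f * D"
    by (simp add: D_def mult.commute)
  then show ?thesis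
    using M.antiautomorphism_transpose_conj transpose_conj_fixed[OF D mat_diag_dim]
      transpose_conj_fixed[OF D _ DT[folded D_def]] T[unfolded irreducible_tridiagonal_def]
    by blast
qed

section \<open>Primitive idempotents\<close>

lemma smult_mat_mult_vec:
  fixes X :: "'a :: comm_semiring_0 mat"
  assumes "X \<in> carrier_mat n m" and "v \<in> carrier_vec m"
  shows "(c \<cdot>\<^sub>m X) *\<^sub>v v = c \<cdot>\<^sub>v (X *\<^sub>v v)"
  using assms by (intro eq_vecI) (auto simp: scalar_prod_def sum_distrib_left mult.assoc)

lemma shifted_mult_eigenvector:
  fixes A :: "'a :: field mat"
  assumes A: "A \<in> carrier_mat n n" and v: "v \<in> carrier_vec n" and Av: "A *\<^sub>v v = \<mu> \<cdot>\<^sub>v v"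
  shows "(c \<cdot>\<^sub>m (A - t \<cdot>\<^sub>m 1\<^sub>m n)) *\<^sub>v v = (c * (\<mu> - t)) \<cdot>\<^sub>v v"
proof -
  have "(A - t \<cdot>\<^sub>m 1\<^sub>m n) *\<^sub>v v = \<mu> \<cdot>\<^sub>v v - t \<cdot>\<^sub>v v"
    using A v by (simp add: minus_mult_distrib_mat_vec smult_mat_mult_vec[OF one_carrier_mat] Av)
  also have "\<dots> = (\<mu> - t) \<cdot>\<^sub>v v"
    using v by (auto simp: algebra_simps)
  moreover have "A - t \<cdot>\<^sub>m 1\<^sub>m n \<in> carrier_mat n n"
    by (simp add: minus_carrier_mat)
  ultimately show ?thesis
    using v by (simp add: smult_mat_mult_vec smult_smult_assoc)
qed

lemma foldr_mult_common_eigenvector: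
  fixes F :: "nat \<Rightarrow> 'a :: field mat"
  assumes v: "v \<in> carrier_vec n"
    and F: "\<forall>j\<in>set js. F j \<in> carrier_mat n n \<and> F j *\<^sub>v v = g j \<cdot>\<^sub>v v"
  shows "foldr (\<lambda>j M. F j * M) js (1\<^sub>m n) \<in> carrier_mat n n \<and>
    foldr (\<lambda>j M. F j * M) js (1\<^sub>m n) *\<^sub>v v = prod_list (map g js) \<cdot>\<^sub>v v"
  using F
proof (induction js)
  case (Cons j js)
  let ?R = "foldr (\<lambda>j M. F j * M) js (1\<^sub>m n)"
  have R: "?R \<in> carrier_mat n n" and Rv: "?R *\<^sub>v v = prod_list (map g js) \<cdot>\<^sub>v v"
    using Cons by simp_all
  have Fj: "F j \<in> carrier_mat n n" and Fjv: "F j *\<^sub>v v = g j \<cdot>\<^sub>v v"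
    using Cons.prems by simp_all
  have "(F j * ?R) *\<^sub>v v = prod_list (map g js) \<cdot>\<^sub>v (F j *\<^sub>v v)"
    using Fj R v by (simp add: Rv mult_mat_vec)
  then show ?case
    using Fj R by (simp add: Fjv smult_smult_assoc mult.commute)
qed (simp add: v)

lemma prim_idem_generated:
  fixes As :: "'a :: field mat"
  assumes As: "As \<in> carrier_mat (Suc d) (Suc d)"
  shows "prim_idem d As th i \<in> generated_mat_algebra (Suc d) {As}"
proof -
  let ?G = "generated_mat_algebra (Suc d) {As}"
  have "As - t \<cdot>\<^sub>m 1\<^sub>m (Suc d) = As + (- t) \<cdot>\<^sub>m 1\<^sub>m (Suc d)" for t :: 'a
    using As by auto
  moreover have "As \<in> ?G" "1\<^sub>m (Suc d) \<in> ?G"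
    by (auto intro: generated_mat_algebra.generator generated_mat_algebra.one)
  ultimately have factor: "c \<cdot>\<^sub>m (As - t \<cdot>\<^sub>m 1\<^sub>m (Suc d)) \<in> ?G" for c t :: 'a
    by (simp add: generated_mat_algebra.add generated_mat_algebra.smult)
  have "foldr (\<lambda>j M. (c j \<cdot>\<^sub>m (As - t j \<cdot>\<^sub>m 1\<^sub>m (Suc d))) * M) js (1\<^sub>m (Suc d)) \<in> ?G" for c t js
    by (induction js) (auto intro: generated_mat_algebra.one generated_mat_algebra.mult factor)
  then show ?thesis
    unfolding prim_idem_def .
qed

lemma prim_idem_carrier:
  "As \<in> carrier_mat (Suc d) (Suc d) \<Longrightarrow> prim_idem d As th i \<in> carrier_mat (Suc d) (Suc d)"
  using generated_mat_algebra_carrier prim_idem_generated by blast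

lemma prim_idem_mult_eigenvector:
  fixes As :: "'a :: field mat"
  assumes As: "As \<in> carrier_mat (Suc d) (Suc d)" and inj: "inj_on th {0..d}"
    and ij: "i \<le> d" "j \<le> d"
    and v: "v \<in> carrier_vec (Suc d)" and Av: "As *\<^sub>v v = th j \<cdot>\<^sub>v v"
  shows "prim_idem d As th i *\<^sub>v v = (if i = j then v else 0\<^sub>v (Suc d))"
proof -
  define F where "F k = (1 / (th i - th k)) \<cdot>\<^sub>m (As - th k \<cdot>\<^sub>m 1\<^sub>m (Suc d))" for k
  define g where "g k = 1 / (th i - th k) * (th j - th k)" for k
  let ?ks = "filter (\<lambda>k. k \<noteq> i) [0..<Suc d]"
  have ks: "set ?ks = {0..d} - {i}"
    by auto
  have F: "\<forall>k\<in>set ?ks. F k \<in> carrier_mat (Suc d) (Suc d) \<and> F k *\<^sub>v v = g k \<cdot>\<^sub>v v"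
    using shifted_mult_eigenvector[OF As v Av] by (simp add: F_def g_def minus_carrier_mat)
  have "prim_idem d As th i = foldr (\<lambda>k M. F k * M) ?ks (1\<^sub>m (Suc d))"
    unfolding prim_idem_def F_def ..
  then have "prim_idem d As th i *\<^sub>v v = prod_list (map g ?ks) \<cdot>\<^sub>v v"
    using foldr_mult_common_eigenvector[OF v F] by simp
  also have "prod_list (map g ?ks) = (\<Prod>k\<in>{0..d} - {i}. g k)"
    unfolding ks[symmetric] by (rule prod.distinct_set_conv_list[symmetric]) simp
  also have "\<dots> = (if i = j then 1 else 0)"
  proof (cases "i = j")
    case True
    have "g k = 1" if "k \<in> {0..d} - {i}" for k
      using that ij inj True unfolding g_def inj_on_def by auto
    then show ?thesis
      using True by simp
  next
    case False
    then show ?thesis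
      using ij by (subst prod_zero) (auto simp: g_def intro!: bexI[of _ j])
  qed
  finally show ?thesis
    using v by auto
qed

lemma mult_mat_unit_mult_vec:
  fixes X :: "'a :: comm_semiring_1 mat"
  assumes "X \<in> carrier_mat m n" and "c \<in> carrier_vec n" and "i < n" and "j < n"
  shows "(X * mat_unit n i j) *\<^sub>v c = c $ j \<cdot>\<^sub>v col X i"
  using assms by (subst mat_unit_mult_right, simp_all, intro eq_vecI)
    (auto simp: scalar_prod_def if_distrib[of "\<lambda>x. _ * x"] mult.commute cong: if_cong)

lemma det_nonzero_if_column_idempotents:
  fixes S :: "'a :: field mat"
  assumes S: "S \<in> carrier_mat n n" and E: "\<And>i. i < n \<Longrightarrow> E i \<in> carrier_mat n n"
    and ES: "\<And>i. i < n \<Longrightarrow> E i * S = S * mat_unit n i i"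
    and nz: "\<And>i. i < n \<Longrightarrow> col S i \<noteq> 0\<^sub>v n"
  shows "det S \<noteq> 0"
proof
  assume "det S = 0"
  then obtain c where c: "c \<in> carrier_vec n" "c \<noteq> 0\<^sub>v n" "S *\<^sub>v c = 0\<^sub>v n"
    using det_0_iff_vec_prod_zero_field[OF S] by auto
  have "c $ i = 0" if i: "i < n" for i
  proof -
    have "c $ i \<cdot>\<^sub>v col S i = (E i * S) *\<^sub>v c"
      using S c(1) i by (simp add: ES mult_mat_unit_mult_vec)
    also have "\<dots> = E i *\<^sub>v 0\<^sub>v n"
      using S E[OF i] c by simp
    also have "\<dots> = 0\<^sub>v n"
      using E[OF i] by (intro eq_vecI) auto
    finally have zero: "c $ i \<cdot>\<^sub>v col S i = 0\<^sub>v n" .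
    have "\<exists>k<n. col S i $ k \<noteq> 0"
    proof (rule ccontr)
      assume "\<not> (\<exists>k<n. col S i $ k \<noteq> 0)"
      then have "col S i = 0\<^sub>v n"
        using S by (intro eq_vecI) auto
      with nz[OF i] show False ..
    qed
    then obtain k where k: "k < n" "col S i $ k \<noteq> 0"
      by blast
    have "c $ i * col S i $ k = 0"
      using arg_cong[OF zero, of "\<lambda>w. w $ k"] k(1) S by simp
    then show ?thesis
      using k(2) by simp
  qed
  then have "c = 0\<^sub>v n"
    using c(1) by (intro eq_vecI) auto
  with c(2) show False ..
qed

lemma eigenbasis_diagonalizes_prim_idems:
  fixes As :: "'a :: field mat"
  assumes As: "As \<in> carrier_mat (Suc d) (Suc d)" and inj: "inj_on th {0..d}"
    and ev: "\<And>i. i \<le> d \<Longrightarrow> eigenvalue As (th i)"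
  obtains S Si where "mat_inverse_pair (Suc d) S Si" and "As = S * mat_diag (Suc d) th * Si"
    and "\<And>i. i \<le> d \<Longrightarrow> prim_idem d As th i = S * mat_unit (Suc d) i i * Si"
proof -
  obtain v where "\<And>i. i \<le> d \<Longrightarrow> eigenvector As (v i) (th i)"
    using ev unfolding eigenvalue_def by metis
  then have v: "v i \<in> carrier_vec (Suc d)" "v i \<noteq> 0\<^sub>v (Suc d)" "As *\<^sub>v v i = th i \<cdot>\<^sub>v v i"
    if "i \<le> d" for i
    using that As unfolding eigenvector_def by auto
  define S where "S = mat (Suc d) (Suc d) (\<lambda>(a, b). v b $ a)"
  have S: "S \<in> carrier_mat (Suc d) (Suc d)"
    by (simp add: S_def)
  have col_S: "col S b = v b" if "b \<le> d" for b
    using v(1)[OF that] that by (auto simp: S_def)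
  have ES: "prim_idem d As th i * S = S * mat_unit (Suc d) i i" if "i \<le> d" for i
  proof (rule mat_col_eqI)
    fix b
    assume "b < dim_col (S * mat_unit (Suc d) i i)"
    then have b: "b \<le> d"
      using S by simp
    have "col (prim_idem d As th i * S) b = prim_idem d As th i *\<^sub>v v b"
      using b by (simp add: col_mult2[OF prim_idem_carrier[OF As] S] col_S)
    also have "\<dots> = (if i = b then v b else 0\<^sub>v (Suc d))"
      using prim_idem_mult_eigenvector[OF As inj that b v(1,3)[OF b]] .
    also have "\<dots> = col (S * mat_unit (Suc d) i i) b"
      using b that v(1)[OF b] by (subst mat_unit_mult_right[OF S]) (auto simp: S_def)
    finally show "col (prim_idem d As th i * S) b = col (S * mat_unit (Suc d) i i) b" .
  qed (use S prim_idem_carrier[OF As, of th i] in simp_all)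
  have AS: "As * S = S * mat_diag (Suc d) th"
  proof (rule mat_col_eqI)
    fix b
    assume "b < dim_col (S * mat_diag (Suc d) th)"
    then have b: "b \<le> d"
      by (simp add: mat_diag_def)
    have "col (As * S) b = th b \<cdot>\<^sub>v v b"
      using b by (simp add: col_mult2[OF As S] col_S v(3))
    also have "\<dots> = col (S * mat_diag (Suc d) th) b"
      unfolding mat_diag_mult_right[OF S] using b v(1)[OF b] by (auto simp: S_def)
    finally show "col (As * S) b = col (S * mat_diag (Suc d) th) b" .
  qed (use As S in \<open>simp_all add: mat_diag_def\<close>)
  have "det S \<noteq> 0"
    using S prim_idem_carrier[OF As] ES col_S v(2)
    by (intro det_nonzero_if_column_idempotents[where E = "prim_idem d As th"]) auto
  then obtain Si
    where "Si \<in> carrier_mat (Suc d) (Suc d)" "Si * S = 1\<^sub>m (Suc d)" "S * Si = 1\<^sub>m (Suc d)"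
    using det_non_zero_imp_unit[OF S] unfolding Units_def ring_mat_def by auto
  then interpret mat_inverse_pair "Suc d" S Si
    using S by unfold_locales
  show thesis
  proof
    show "mat_inverse_pair (Suc d) S Si"
      by unfold_locales
    show "As = S * mat_diag (Suc d) th * Si"
      using mult_P_Q_cancel[OF As] by (simp flip: AS)
    show "prim_idem d As th i = S * mat_unit (Suc d) i i * Si" if "i \<le> d" for i
      using mult_P_Q_cancel[OF prim_idem_carrier[OF As]] by (simp flip: ES[OF that])
  qed
qed

lemma (in mat_inverse_pair) conj_sandwich_eq_zero_iff:
  assumes T: "T \<in> carrier_mat n n" and "i < n" and "j < n"
  shows "P * mat_unit n i i * Q * (P * T * Q) * (P * mat_unit n j j * Q) = 0\<^sub>m n n \<longleftrightarrow>
    T $$ (i, j) = 0"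
proof -
  have iT: "mat_unit n i i * T \<in> carrier_mat n n"
    by (rule mult_carrier_mat[OF mat_unit_carrier T])
  have "P * mat_unit n i i * Q * (P * T * Q) * (P * mat_unit n j j * Q)
      = P * (mat_unit n i i * T) * Q * (P * mat_unit n j j * Q)"
    by (simp only: conj_mult[OF mat_unit_carrier T])
  also have "\<dots> = P * (mat_unit n i i * T * mat_unit n j j) * Q"
    by (rule conj_mult[OF iT mat_unit_carrier, symmetric])
  also have "\<dots> = P * (T $$ (i, j) \<cdot>\<^sub>m mat_unit n i j) * Q"
    using assms by (simp add: mat_unit_sandwich)
  finally have "P * mat_unit n i i * Q * (P * T * Q) * (P * mat_unit n j j * Q)
      = P * (T $$ (i, j) \<cdot>\<^sub>m mat_unit n i j) * Q" .
  moreover have "P * X * Q = 0\<^sub>m n n \<longleftrightarrow> X = 0\<^sub>m n n" if X: "X \<in> carrier_mat n n" for X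
  proof
    assume "P * X * Q = 0\<^sub>m n n"
    then have "X = Q * 0\<^sub>m n n * P"
      using conj_cancel[OF X] by simp
    then show "X = 0\<^sub>m n n"
      by (simp add: right_mult_zero_mat[OF Q_carrier] left_mult_zero_mat[OF P_carrier])
  qed (simp add: right_mult_zero_mat[OF P_carrier] left_mult_zero_mat[OF Q_carrier])
  moreover have "T $$ (i, j) \<cdot>\<^sub>m mat_unit n i j = 0\<^sub>m n n \<longleftrightarrow> T $$ (i, j) = 0"
    using assms(2,3) by (auto simp: mat_eq_iff)
  ultimately show ?thesis
    by simp
qed

lemma (in mat_inverse_pair) irreducible_tridiagonal_if_conj_sandwiches:
  assumes T: "T \<in> carrier_mat n n"
    and zero: "\<And>i j. i < n \<Longrightarrow> j < n \<Longrightarrow> \<bar>int i - int j\<bar> > 1 \<Longrightarrow>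
      P * mat_unit n i i * Q * (P * T * Q) * (P * mat_unit n j j * Q) = 0\<^sub>m n n"
    and nonzero: "\<And>i j. i < n \<Longrightarrow> j < n \<Longrightarrow> \<bar>int i - int j\<bar> = 1 \<Longrightarrow>
      P * mat_unit n i i * Q * (P * T * Q) * (P * mat_unit n j j * Q) \<noteq> 0\<^sub>m n n"
  shows "irreducible_tridiagonal n T"
  unfolding irreducible_tridiagonal_def
  using T zero nonzero by (auto simp: conj_sandwich_eq_zero_iff[OF T])

lemma (in mat_inverse_pair) conj_tridiagonal_and_idempotents_generate_carrier:
  assumes T: "irreducible_tridiagonal n T"
    and units: "\<And>i. i < n \<Longrightarrow> P * mat_unit n i i * Q \<in> generated_mat_algebra n {B}"
  shows "carrier_mat n n \<subseteq> generated_mat_algebra n {P * T * Q, B}"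
proof (rule conj_irreducible_generates_carrier)
  show "T \<in> carrier_mat n n" and "\<And>i. Suc i < n \<Longrightarrow> T $$ (i, Suc i) \<noteq> 0 \<and> T $$ (Suc i, i) \<noteq> 0"
    using T unfolding irreducible_tridiagonal_def by blast+
  have "generated_mat_algebra n {B} \<subseteq> generated_mat_algebra n {P * T * Q, B}"
    by (simp add: generated_mat_algebra_minimal generated_mat_algebra.generator)
  then show "\<And>i. i < n \<Longrightarrow> P * mat_unit n i i * Q \<in> generated_mat_algebra n {P * T * Q, B}"
    using units by blast
qed (simp add: generated_mat_algebra.generator)

theorem lemma5p4:
  fixes d :: nat and A As :: "'a :: field mat" and ths :: "nat \<Rightarrow> 'a"
  assumes "mult_free d A" and "mult_free d As"
    and "eig_ordering d As ths"
    and "\<And>i j. i \<le> d \<Longrightarrow> j \<le> d \<Longrightarrow> \<bar>int i - int j\<bar> > 1 \<Longrightarrow>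
           prim_idem d As ths i * A * prim_idem d As ths j = 0\<^sub>m (Suc d) (Suc d)"
    and "\<And>i j. i \<le> d \<Longrightarrow> j \<le> d \<Longrightarrow> \<bar>int i - int j\<bar> = 1 \<Longrightarrow>
           prim_idem d As ths i * A * prim_idem d As ths j \<noteq> 0\<^sub>m (Suc d) (Suc d)"
  shows "\<exists>\<sigma>. antiautomorphism (Suc d) \<sigma> \<and> \<sigma> A = A \<and> \<sigma> As = As \<and>
           (\<forall>\<tau>. antiautomorphism (Suc d) \<tau> \<and> \<tau> A = A \<and> \<tau> As = As \<longrightarrow>
                 (\<forall>X\<in>carrier_mat (Suc d) (Suc d). \<tau> X = \<sigma> X)) \<and>
           (\<forall>X\<in>carrier_mat (Suc d) (Suc d). \<sigma> (\<sigma> X) = X)"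
proof -
  have A: "A \<in> carrier_mat (Suc d) (Suc d)" and As: "As \<in> carrier_mat (Suc d) (Suc d)"
    using assms(1,2) unfolding mult_free_def by simp_all
  have inj: "inj_on ths {0..d}" and ev: "\<And>i. i \<le> d \<Longrightarrow> eigenvalue As (ths i)"
    using assms(3) unfolding eig_ordering_def by auto
  obtain S Si where "mat_inverse_pair (Suc d) S Si" and As_eq: "As = S * mat_diag (Suc d) ths * Si"
    and E_eq: "\<And>i. i \<le> d \<Longrightarrow> prim_idem d As ths i = S * mat_unit (Suc d) i i * Si"
    using eigenbasis_diagonalizes_prim_idems[OF As inj ev] by blast
  then interpret mat_inverse_pair "Suc d" S Si
    by simp
  define T where "T = Si * A * S"
  have T: "T \<in> carrier_mat (Suc d) (Suc d)" and A_eq: "A = S * T * Si"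
    using mat_inverse_pair.conj_carrier[OF swap A] mat_inverse_pair.conj_cancel[OF swap A]
    by (simp_all add: T_def)
  have T_irr: "irreducible_tridiagonal (Suc d) T"
    using assms(4,5)
    by (intro irreducible_tridiagonal_if_conj_sandwiches[OF T]) (simp_all add: E_eq flip: A_eq)
  obtain \<sigma> where \<sigma>: "antiautomorphism (Suc d) \<sigma>" "\<sigma> A = A" "\<sigma> As = As"
    using exists_antiautomorphism_fixing[OF T_irr, of ths] by (auto simp flip: A_eq As_eq)
  have "S * mat_unit (Suc d) i i * Si \<in> generated_mat_algebra (Suc d) {As}" if "i < Suc d" for i
    using that E_eq[of i] prim_idem_generated[OF As, of ths i] by simp
  then have gen: "carrier_mat (Suc d) (Suc d) \<subseteq> generated_mat_algebra (Suc d) {A, As}"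
    using conj_tridiagonal_and_idempotents_generate_carrier[OF T_irr] by (simp flip: A_eq)
  have unique: "\<tau> X = \<sigma> X" if "antiautomorphism (Suc d) \<tau>" "\<tau> A = A" "\<tau> As = As"
    and "X \<in> carrier_mat (Suc d) (Suc d)" for \<tau> X
    by (rule antiautomorphisms_eq_on_generated[OF that(1) \<sigma>(1), of "{A, As}"])
      (use that \<sigma> A As gen in auto)
  have involutive: "\<sigma> (\<sigma> X) = X" if "X \<in> carrier_mat (Suc d) (Suc d)" for X
    by (rule antiautomorphism_involutive_on_generated[OF \<sigma>(1), of "{A, As}"])
      (use that \<sigma> A As gen in auto)
  show ?thesis
    using \<sigma> unique involutive by blast
qed

end
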